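(* Let $\alpha$, $F_\alpha$, the $\alpha$-Lüroth expansions and the measure $\mu_\alpha$ be as in the context, and let $T:\mathcal U\to\mathcal U$ be the tent map $T(x)=2x$ for $x\in[0,1/2)$, $T(x)=2-2x$ for $x\in[1/2,1]$. Define $\theta_\alpha:\mathcal U\to\mathcal U$ by $\theta_\alpha(0)=0$ and, for $x=[\ell_1,\ell_2,\dots]_\alpha$, \[\theta_\alpha(x):=-2\sum_{k\ge1}(-1)^k2^{-\sum_{i=1}^k\ell_i}\] (the sum being finite if the expansion is finite). Then $\theta_\alpha$ is a homeomorphism with $\theta_\alpha\circ F_\alpha=T\circ\theta_\alpha$, so $(\mathcal U,F_\alpha)$ and $(\mathcal U,T)$ are topologically conjugate. Moreover, $\theta_\alpha$ equals the distribution function $x\mapsto\mu_\alpha([0,x])$ of $\mu_\alpha$.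
   Context: Let $\mathcal U=[0,1]$. $\alpha=\{A_n:n\in\mathbb N\}$ is a countable partition of $\mathcal U$ (up to the point $0$) into left-open, right-closed intervals of positive length, ordered from right to left starting with $A_1$, accumulating only at $0$; $a_n$ is the length of $A_n$, $t_n:=\sum_{k\ge n}a_k$, $A_n=(t_{n+1},t_n]$. $F_\alpha(x)=(1-x)/a_1$ on $A_1$, $F_\alpha(x)=a_{n-1}(x-t_{n+1})/a_n+t_n$ on $A_n$ ($n\ge2$), $F_\alpha(0)=0$; $L_\alpha(x)=(t_n-x)/a_n$ on $A_n$, $L_\alpha(0)=0$. For $x\ne0$, the $\alpha$-Lüroth digits $\ell_k$ are defined by $L_\alpha^{k-1}(x)\in A_{\ell_k}$, the sequence terminating at step $k$ iff $L_\alpha^{k-1}(x)=t_n$ for some $n\ge2$; one writes $x=[\ell_1,\ell_2,\dots]_\alpha$, and $x=\sum_{n}(-1)^{n-1}(\prod_{i<n}a_{\ell_i})t_{\ell_n}$. The $\alpha$-Farey cylinder sets of level $n$ are $\widehat C_\alpha(x_1,\dots,x_n):=\{y\in\mathcal U: \text{for } k=1,\dots,n,\ F_\alpha^{k-1}(y)\in A_1 \text{ iff } x_k=1\}$ for $x_1,\dots,x_n\in\{0,1\}$ (these form a partition of $\mathcal U$ into $2^n$ intervals). $\mu_\alpha$ is the measure of maximal entropy of $F_\alpha$, i.e. the Borel probability measure assigning mass $2^{-n}$ to each $n$-th level $\alpha$-Farey cylinder set. *)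

theory Defs
  imports "HOL-Probability.Probability"
begin

text \<open>The partition alpha is encoded by the lengths a n (n >= 1) of the intervals A_n;
  the value a 0 is irrelevant.\<close>

definition alpha_partition :: "(nat \<Rightarrow> real) \<Rightarrow> bool" where
  "alpha_partition a \<longleftrightarrow> (\<forall>n\<ge>1. a n > 0) \<and> ((\<lambda>k. a (Suc k)) sums 1)"

definition tt :: "(nat \<Rightarrow> real) \<Rightarrow> nat \<Rightarrow> real" where
  "tt a n = (\<Sum>k. a (k + n))"

definition AA :: "(nat \<Rightarrow> real) \<Rightarrow> nat \<Rightarrow> real set" where
  "AA a n = {tt a (Suc n)<..tt a n}"

text \<open>index n >= 1 of the interval A_n containing x (meaningful for x in (0,1])\<close>
definition idx :: "(nat \<Rightarrow> real) \<Rightarrow> real \<Rightarrow> nat" where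
  "idx a x = (THE n. n \<ge> 1 \<and> x \<in> AA a n)"

definition F_alpha :: "(nat \<Rightarrow> real) \<Rightarrow> real \<Rightarrow> real" where
  "F_alpha a x =
     (if x = 0 then 0
      else if idx a x = 1 then (1 - x) / a 1
      else a (idx a x - 1) * (x - tt a (Suc (idx a x))) / a (idx a x) + tt a (idx a x))"

definition L_alpha :: "(nat \<Rightarrow> real) \<Rightarrow> real \<Rightarrow> real" where
  "L_alpha a x = (if x = 0 then 0 else (tt a (idx a x) - x) / a (idx a x))"

text \<open>k-th alpha-Lueroth digit (k >= 1): L^(k-1)(x) lies in A_(digit k);
  it exists as long as L^(k-1)(x) is nonzero, and the expansion ends at step k iff L^k(x) = 0.\<close>
definition luroth_digit :: "(nat \<Rightarrow> real) \<Rightarrow> real \<Rightarrow> nat \<Rightarrow> nat" where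
  "luroth_digit a x k = idx a ((L_alpha a ^^ (k - 1)) x)"

definition theta_term :: "(nat \<Rightarrow> real) \<Rightarrow> real \<Rightarrow> nat \<Rightarrow> real" where
  "theta_term a x k =
     (if (L_alpha a ^^ (k - 1)) x \<noteq> 0
      then (-1) ^ k * (1/2) ^ (\<Sum>i=1..k. luroth_digit a x i) else 0)"

definition theta_alpha :: "(nat \<Rightarrow> real) \<Rightarrow> real \<Rightarrow> real" where
  "theta_alpha a x = (if x = 0 then 0 else - 2 * (\<Sum>k. theta_term a x (Suc k)))"

definition tent :: "real \<Rightarrow> real" where
  "tent x = (if x < 1/2 then 2 * x else 2 - 2 * x)"

text \<open>alpha-Farey cylinder set; the list xs of booleans encodes x_1..x_n (True = 1).\<close>
definition farey_cyl :: "(nat \<Rightarrow> real) \<Rightarrow> bool list \<Rightarrow> real set" where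
  "farey_cyl a xs = {y \<in> {0..1}. \<forall>k < length xs. ((F_alpha a ^^ k) y \<in> AA a 1 \<longleftrightarrow> xs ! k)}"

text \<open>mu is a Borel probability measure on [0,1] which is a measure of maximal entropy
  in the sense of the paper: mass 2^-n on every n-th level Farey cylinder.\<close>
definition is_mu_alpha :: "(nat \<Rightarrow> real) \<Rightarrow> real measure \<Rightarrow> bool" where
  "is_mu_alpha a \<mu> \<longleftrightarrow> prob_space \<mu> \<and> sets \<mu> = sets (restrict_space borel {0..1::real})
     \<and> (\<forall>xs. measure \<mu> (farey_cyl a xs) = (1/2) ^ length xs)"

end

theory Submission
  imports Defs
begin

text \<open>Peeling off the first digit gives \<open>\<theta> x = 2\<^sup>-\<^sup>n (2 - \<theta> (L x))\<close> for \<open>x \<in> A\<^sub>n\<close>. As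
  \<open>L\<close> maps each \<open>A\<^sub>n\<close> affinely onto \<open>[0,1)\<close> and \<open>2\<^sup>-\<^sup>n \<le> 1/2\<close>, induction on the depth shows
  that \<open>\<theta>\<close> takes values in \<open>[0,1]\<close> and is increasing, and strictly so because the lengths
  \<open>a\<^sub>n\<close> are bounded by some \<open>q < 1\<close>. The two inverse branches \<open>u/2\<close> and \<open>1 - u/2\<close> of the tent
  map are realised by \<open>\<theta>\<close> on \<open>A\<^sub>n\<^sub>+\<^sub>1\<close> and on \<open>A\<^sub>1\<close>, so the image of \<open>\<theta>\<close> contains every
  dyadic rational; a monotone map with dense image is continuous, hence \<open>\<theta>\<close> is a homeomorphism.
  The same recursion yields \<open>\<theta> \<circ> F = T \<circ> \<theta>\<close>, so \<open>\<theta>\<close> carries Farey cylinders onto cylinders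
  of the tent map, which are dyadic intervals up to their endpoints. Hence the image of Lebesgue
  measure under \<open>\<theta>\<^sup>-\<^sup>1\<close> is a measure of maximal entropy, and conversely the image under \<open>\<theta>\<close> of any
  such measure is Lebesgue measure, so its distribution function is \<open>\<theta>\<close>.\<close>

lemma nonpos_if_le_geometric:
  fixes z c :: real
  assumes "\<And>k. z \<le> c * (1/2)^k"
  shows "z \<le> 0"
proof -
  have "(\<lambda>k. c * (1/2::real)^k) \<longlonglongrightarrow> 0"
    by (intro tendsto_mult_right_zero LIMSEQ_realpow_zero) auto
  thus ?thesis using assms by (intro LIMSEQ_le_const) auto
qed

lemma continuous_on_mono_dense_image:
  fixes f :: "'a::linorder_topology \<Rightarrow> 'b::linorder_topology"
  assumes mono: "\<And>x y. x \<in> S \<Longrightarrow> y \<in> S \<Longrightarrow> x \<le> y \<Longrightarrow> f x \<le> f y"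
    and range: "f ` S \<subseteq> {c..d}"
    and dense: "\<And>u v. c \<le> u \<Longrightarrow> u < v \<Longrightarrow> v \<le> d \<Longrightarrow> \<exists>w\<in>S. u < f w \<and> f w < v"
  shows "continuous_on S f"
  unfolding continuous_on_def
proof (intro ballI order_tendstoI)
  fix x assume x: "x \<in> S"
  have fx: "c \<le> f x" "f x \<le> d" using range x by auto
  have in_S: "eventually (\<lambda>y. y \<in> S) (at x within S)"
    unfolding eventually_at_filter by simp
  show "eventually (\<lambda>y. u < f y) (at x within S)" if u: "u < f x" for u
  proof (cases "c \<le> u")
    case True
    then obtain w where w: "w \<in> S" "u < f w" "f w < f x"
      using dense[of u "f x"] u fx by auto
    have "w < x"
      using mono[OF x w(1)] w(3) by (meson leD leI)
    hence "eventually (\<lambda>y. w < y) (at x within S)"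
      by (rule order_tendstoD(1)[OF tendsto_ident_at])
    thus ?thesis
      using in_S by eventually_elim (meson less_imp_le less_le_trans mono w)
  next
    case False
    show ?thesis using in_S by eventually_elim (use False range in force)
  qed
  show "eventually (\<lambda>y. f y < v) (at x within S)" if v: "f x < v" for v
  proof (cases "v \<le> d")
    case True
    then obtain w where w: "w \<in> S" "f x < f w" "f w < v"
      using dense[of "f x" v] v fx by auto
    have "x < w"
      using mono[OF w(1) x] w(2) by (meson leD leI)
    hence "eventually (\<lambda>y. y < w) (at x within S)"
      by (rule order_tendstoD(2)[OF tendsto_ident_at])
    thus ?thesis
      using in_S by eventually_elim (meson less_imp_le le_less_trans mono w)
  next
    case False
    show ?thesis using in_S by eventually_elim (use False range in force)
  qed
qed

section \<open>The intervals \<open>A\<^sub>n\<close> and the map \<open>\<theta>\<close>\<close>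

locale luroth_partition =
  fixes a :: "nat \<Rightarrow> real"
  assumes partition: "alpha_partition a"
begin

abbreviation L where "L \<equiv> L_alpha a"
abbreviation F where "F \<equiv> F_alpha a"
abbreviation \<theta> where "\<theta> \<equiv> theta_alpha a"

lemma a_pos: "1 \<le> n \<Longrightarrow> 0 < a n"
  using partition unfolding alpha_partition_def by auto

lemma a_sums: "(\<lambda>k. a (Suc k)) sums 1"
  using partition unfolding alpha_partition_def by auto

lemma tt_Suc_eq: "tt a (Suc k) = 1 - (\<Sum>i<k. a (Suc i))"
proof -
  have "tt a (Suc k) = (\<Sum>n. a (Suc (n + k)))" unfolding tt_def by simp
  also have "\<dots> = (\<Sum>n. a (Suc n)) - (\<Sum>i<k. a (Suc i))"
    using suminf_minus_initial_segment[OF sums_summable[OF a_sums], of k] by simp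
  finally show ?thesis using sums_unique[OF a_sums] by simp
qed

lemma tt_1 [simp]: "tt a (Suc 0) = 1" "tt a 1 = 1"
  using tt_Suc_eq[of 0] by simp_all

lemma tt_eq_add: "1 \<le> n \<Longrightarrow> tt a n = a n + tt a (Suc n)"
  by (cases n) (simp_all add: tt_Suc_eq)

lemma tt_tendsto_0: "(\<lambda>k. tt a (Suc k)) \<longlonglongrightarrow> 0"
proof -
  have "(\<lambda>k. 1 - (\<Sum>i<k. a (Suc i))) \<longlonglongrightarrow> 1 - 1"
    using a_sums unfolding sums_def by (intro tendsto_intros)
  thus ?thesis unfolding tt_Suc_eq by simp
qed

lemma tt_pos: "1 \<le> n \<Longrightarrow> 0 < tt a n"
proof -
  assume "1 \<le> n"
  then obtain k where k: "n = Suc k" by (cases n) auto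
  have "(\<Sum>i<k. a (Suc i)) < (\<Sum>i. a (Suc i))"
    using sum_less_suminf[OF sums_summable[OF a_sums]] a_pos by simp
  thus ?thesis using sums_unique[OF a_sums] by (simp add: k tt_Suc_eq)
qed

lemma tt_strict_antimono: "1 \<le> n \<Longrightarrow> n < m \<Longrightarrow> tt a m < tt a n"
proof (induction m)
  case (Suc m)
  have "tt a (Suc m) < tt a m" using tt_eq_add[of m] a_pos[of m] Suc.prems by simp
  thus ?case using Suc by (cases "n < m") (auto simp: less_Suc_eq)
qed simp

lemma tt_antimono: "1 \<le> n \<Longrightarrow> n \<le> m \<Longrightarrow> tt a m \<le> tt a n"
  using tt_strict_antimono by (cases "n = m") (auto simp: less_imp_le)

lemma tt_le_1: "1 \<le> n \<Longrightarrow> tt a n \<le> 1"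
  using tt_antimono[of 1 n] tt_1(2) by linarith

lemma AA_disjoint: "1 \<le> n \<Longrightarrow> n < m \<Longrightarrow> AA a n \<inter> AA a m = {}"
  using tt_antimono[of "Suc n" m] unfolding AA_def by auto

lemma idx_eqI:
  assumes "1 \<le> n" "x \<in> AA a n"
  shows "idx a x = n"
  unfolding idx_def
proof (rule the_equality)
  fix m assume "1 \<le> m \<and> x \<in> AA a m"
  thus "m = n"
    using AA_disjoint[of n m] AA_disjoint[of m n] assms by (cases m n rule: linorder_cases) auto
qed (use assms in simp)

lemma ex_AA:
  assumes "0 < x" "x \<le> 1"
  shows "\<exists>n\<ge>1. x \<in> AA a n"
proof -
  have "eventually (\<lambda>k. tt a (Suc k) < x) sequentially"
    using order_tendstoD(2)[OF tt_tendsto_0 assms(1)] .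
  then obtain N where "\<forall>n\<ge>N. tt a (Suc n) < x"
    unfolding eventually_sequentially ..
  hence "tt a (Suc N) < x" by simp
  moreover have "\<not> tt a (Suc 0) < x"
    using assms by simp
  ultimately obtain j where "\<not> tt a (Suc j) < x" "tt a (Suc (Suc j)) < x"
    using ex_least_nat_less[of "\<lambda>m. tt a (Suc m) < x" N] by auto
  thus ?thesis unfolding AA_def by (intro exI[of _ "Suc j"]) auto
qed

lemma idx_bounds:
  assumes "0 < x" "x \<le> 1"
  shows "1 \<le> idx a x" "tt a (Suc (idx a x)) < x" "x \<le> tt a (idx a x)"
proof -
  obtain n where "1 \<le> n" "x \<in> AA a n" using ex_AA assms by blast
  thus "1 \<le> idx a x" "tt a (Suc (idx a x)) < x" "x \<le> tt a (idx a x)"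
    using idx_eqI unfolding AA_def by auto
qed

lemma idx_tt: "1 \<le> n \<Longrightarrow> idx a (tt a n) = n"
  by (rule idx_eqI) (use tt_strict_antimono[of n "Suc n"] in \<open>auto simp: AA_def\<close>)

lemma a_le_uniform: "\<exists>q. 0 \<le> q \<and> q < 1 \<and> (\<forall>n\<ge>1. a n \<le> q)"
proof (intro exI conjI allI impI)
  have pair: "a n + a m \<le> 1" if "1 \<le> n" "1 \<le> m" "m \<noteq> n" for n m
  proof -
    have "(\<Sum>i\<in>{n - 1, m - 1}. a (Suc i)) \<le> (\<Sum>i. a (Suc i))"
      by (rule sum_le_suminf[OF sums_summable[OF a_sums]]) (simp_all add: less_imp_le a_pos)
    thus ?thesis using that sums_unique[OF a_sums] by simp
  qed
  show "a n \<le> 1 - min (a 1) (a 2)" if "1 \<le> n" for n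
    using pair[of n 1] pair[of n 2] that by (cases "n = 1") auto
  show "0 \<le> 1 - min (a 1) (a 2)" "1 - min (a 1) (a 2) < 1"
    using pair[of 1 2] a_pos[of 1] a_pos[of 2] by auto
qed

lemma L_0 [simp]: "L 0 = 0"
  by (simp add: L_alpha_def)

lemma L_bounds:
  assumes "0 \<le> x" "x \<le> 1"
  shows "0 \<le> L x" "L x < 1"
proof -
  have "0 \<le> L x \<and> L x < 1"
  proof (cases "x = 0")
    case False
    hence "0 < x" using assms by simp
    note bounds = idx_bounds[OF this assms(2)]
    show ?thesis
      using False bounds tt_eq_add[OF bounds(1)] a_pos[OF bounds(1)]
      by (simp add: L_alpha_def divide_simps)
  qed simp
  thus "0 \<le> L x" "L x < 1" by auto
qed

lemma L_iter_bounds: "0 \<le> x \<Longrightarrow> x \<le> 1 \<Longrightarrow> 0 \<le> (L^^k) x \<and> (L^^k) x \<le> 1"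
proof (induction k)
  case (Suc k)
  thus ?case using L_bounds[of "(L^^k) x"] by simp
qed simp

lemma L_iter_0: "(L^^k) 0 = 0"
  by (induction k) auto

lemma L_iter_ne_0: "(L^^j) x \<noteq> 0 \<Longrightarrow> i \<le> j \<Longrightarrow> (L^^i) x \<noteq> 0"
  by (metis L_iter_0 funpow_add le_add_diff_inverse2 o_apply)

lemma luroth_digit_ge_1:
  assumes "0 \<le> x" "x \<le> 1" "(L^^(i - 1)) x \<noteq> 0"
  shows "1 \<le> luroth_digit a x i"
  using L_iter_bounds[OF assms(1,2), of "i - 1"] idx_bounds(1) assms(3)
  unfolding luroth_digit_def by force

lemma theta_term_bound:
  assumes "0 \<le> x" "x \<le> 1"
  shows "\<bar>theta_term a x k\<bar> \<le> (1/2)^k"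
proof (cases "(L^^(k - 1)) x = 0")
  case False
  have "(\<Sum>i=1..k. 1) \<le> (\<Sum>i=1..k. luroth_digit a x i)"
    using luroth_digit_ge_1[OF assms] L_iter_ne_0[OF False] by (intro sum_mono) auto
  hence "((1::real)/2)^(\<Sum>i=1..k. luroth_digit a x i) \<le> (1/2)^k"
    by (intro power_decreasing) auto
  thus ?thesis using False by (simp add: theta_term_def abs_mult power_abs)
qed (simp add: theta_term_def)

lemma theta_term_summable:
  assumes "0 \<le> x" "x \<le> 1"
  shows "summable (\<lambda>k. theta_term a x (Suc k))"
  unfolding summable_Suc_iff
  by (rule summable_comparison_test'[where g="\<lambda>k. (1/2::real)^k" and N=0])
     (auto intro: summable_geometric simp: theta_term_bound[OF assms])

lemma theta_term_Suc_Suc: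
  assumes "0 < x" "x \<le> 1"
  shows "theta_term a x (Suc (Suc k)) = - ((1/2)^idx a x) * theta_term a (L x) (Suc k)"
proof -
  have digit_Suc: "luroth_digit a x (Suc i) = luroth_digit a (L x) i" if "1 \<le> i" for i
    using that unfolding luroth_digit_def
    by (cases i) (simp_all add: funpow_Suc_right del: funpow.simps)
  have "(\<Sum>i=1..Suc (Suc k). luroth_digit a x i)
      = luroth_digit a x 1 + (\<Sum>i=Suc 1..Suc (Suc k). luroth_digit a x i)"
    by (rule sum.atLeast_Suc_atMost) simp
  also have "\<dots> = luroth_digit a x 1 + (\<Sum>i=1..Suc k. luroth_digit a x (Suc i))"
    by (simp only: sum.shift_bounds_cl_Suc_ivl)
  also have "(\<Sum>i=1..Suc k. luroth_digit a x (Suc i)) = (\<Sum>i=1..Suc k. luroth_digit a (L x) i)"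
    by (rule sum.cong) (simp_all add: digit_Suc)
  also have "luroth_digit a x 1 = idx a x"
    by (simp add: luroth_digit_def)
  finally show ?thesis
    unfolding theta_term_def by (simp add: power_add funpow_Suc_right del: funpow.simps)
qed

lemma theta_alpha_0 [simp]: "\<theta> 0 = 0"
  by (simp add: theta_alpha_def)

lemma theta_alpha_rec:
  assumes "0 < x" "x \<le> 1"
  shows "\<theta> x = (1/2)^idx a x * (2 - \<theta> (L x))"
proof -
  let ?c = "(1/2::real)^idx a x"
  have Lx: "0 \<le> L x" "L x \<le> 1" using L_bounds assms by (auto simp: less_imp_le)
  have "(\<Sum>k. theta_term a x (Suc k)) = theta_term a x 1 + (\<Sum>k. theta_term a x (Suc (Suc k)))"
    using suminf_split_head[OF theta_term_summable] assms by simp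
  also have "theta_term a x 1 = - ?c"
    using assms by (simp add: theta_term_def luroth_digit_def)
  also have "(\<Sum>k. theta_term a x (Suc (Suc k))) = - ?c * (\<Sum>k. theta_term a (L x) (Suc k))"
    using suminf_mult[OF theta_term_summable[OF Lx], of "- ?c"]
    by (simp only: theta_term_Suc_Suc[OF assms])
  also have "(\<Sum>k. theta_term a (L x) (Suc k)) = - \<theta> (L x) / 2"
    by (cases "L x = 0") (simp_all add: theta_alpha_def theta_term_def L_iter_0)
  finally have sum_eq: "(\<Sum>k. theta_term a x (Suc k)) = - ?c + - ?c * (- \<theta> (L x) / 2)" .
  have "\<theta> x = - 2 * (\<Sum>k. theta_term a x (Suc k))"
    using assms by (simp add: theta_alpha_def)
  also have "\<dots> = ?c * (2 - \<theta> (L x))"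
    unfolding sum_eq by (simp add: algebra_simps)
  finally show ?thesis .
qed

lemma theta_alpha_abs_le_2:
  assumes "0 \<le> x" "x \<le> 1"
  shows "\<bar>\<theta> x\<bar> \<le> 2"
proof -
  have g: "(\<lambda>k. (1/2::real)^k / 2) sums 1"
    using sums_divide[OF geometric_sums[of "1/2::real"], of 2] by simp
  have "\<bar>theta_term a x (Suc k)\<bar> \<le> (1/2)^k / 2" for k
    using theta_term_bound[OF assms, of "Suc k"] by simp
  hence "norm (\<Sum>k. theta_term a x (Suc k)) \<le> (\<Sum>k. (1/2::real)^k / 2)"
    by (intro norm_suminf_le sums_summable[OF g]) simp
  hence "\<bar>\<Sum>k. theta_term a x (Suc k)\<bar> \<le> 1"
    using sums_unique[OF g] by simp
  thus ?thesis by (simp add: theta_alpha_def abs_mult)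
qed

lemma theta_alpha_approx_bounds:
  "0 \<le> x \<Longrightarrow> x \<le> 1 \<Longrightarrow> - 2 * (1/2)^k \<le> \<theta> x \<and> \<theta> x \<le> 1 + 2 * (1/2)^k"
proof (induction k arbitrary: x)
  case 0
  thus ?case using theta_alpha_abs_le_2[of x] by (simp add: abs_le_iff)
next
  case (Suc k)
  show ?case
  proof (cases "x = 0")
    case False
    hence x: "0 < x" "x \<le> 1" using Suc.prems by auto
    define c where "c = (1/2::real)^idx a x"
    define e where "e = (1/2::real)^k"
    have c: "0 < c" "c \<le> 1/2"
      using power_decreasing[OF idx_bounds(1)[OF x], of "1/2::real"] unfolding c_def by auto
    have e: "0 \<le> e" unfolding e_def by simp
    have rec: "\<theta> x = c * (2 - \<theta> (L x))" unfolding c_def by (rule theta_alpha_rec[OF x])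
    have IH: "- 2 * e \<le> \<theta> (L x)" "\<theta> (L x) \<le> 1 + 2 * e"
      using Suc.IH[of "L x"] L_bounds[OF Suc.prems] unfolding e_def by auto
    define d where "d = 2 - \<theta> (L x)"
    have d: "1 - 2 * e \<le> d" "d \<le> 2 + 2 * e" using IH unfolding d_def by auto
    have "- e \<le> c * d \<and> c * d \<le> 1 + e"
    proof (cases "0 \<le> d")
      case True
      have "c * d \<le> 1/2 * d" using True c by (intro mult_right_mono) auto
      moreover have "0 \<le> c * d" using True c by simp
      ultimately show ?thesis using d e by auto
    next
      case False
      have "1/2 * d \<le> c * d" using False c by (intro mult_right_mono_neg) auto
      moreover have "c * d \<le> 0" using False c by (simp add: mult_nonneg_nonpos)
      ultimately show ?thesis using d e by auto
    qed
    thus ?thesis using rec unfolding d_def e_def by simp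
  qed simp
qed

lemma theta_alpha_bounds:
  assumes "0 \<le> x" "x \<le> 1"
  shows "0 \<le> \<theta> x" "\<theta> x \<le> 1"
proof -
  have "- \<theta> x \<le> 2 * (1/2)^k" "\<theta> x - 1 \<le> 2 * (1/2)^k" for k
    using theta_alpha_approx_bounds[OF assms, of k] by auto
  hence "- \<theta> x \<le> 0" "\<theta> x - 1 \<le> 0" by (metis nonpos_if_le_geometric)+
  thus "0 \<le> \<theta> x" "\<theta> x \<le> 1" by auto
qed

lemma theta_alpha_idx_bounds:
  assumes "0 < x" "x \<le> 1"
  shows "(1/2)^idx a x \<le> \<theta> x" "\<theta> x \<le> 2 * (1/2)^idx a x"
  using theta_alpha_rec[OF assms] theta_alpha_bounds[of "L x"] L_bounds[of x] assms
  by (auto simp: less_imp_le mult_left_le)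

lemma theta_alpha_tt: "1 \<le> n \<Longrightarrow> \<theta> (tt a n) = 2 * (1/2)^n"
  using theta_alpha_rec[of "tt a n"] tt_pos[of n] tt_le_1[of n] idx_tt[of n]
  by (simp add: L_alpha_def)

lemma theta_alpha_1 [simp]: "\<theta> 1 = 1"
proof -
  have "\<theta> (tt a 1) = 2 * (1/2)^1" by (rule theta_alpha_tt) simp
  thus ?thesis by (simp only: tt_1) simp
qed

lemma idx_antimono:
  assumes "0 < x" "x \<le> y" "y \<le> 1"
  shows "idx a y \<le> idx a x"
proof (rule ccontr)
  assume "\<not> idx a y \<le> idx a x"
  hence "tt a (idx a y) \<le> tt a (Suc (idx a x))"
    using tt_antimono[of "Suc (idx a x)" "idx a y"] by simp
  thus False using idx_bounds[OF assms(1)] idx_bounds[of y] assms by simp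
qed

lemma theta_alpha_approx_mono:
  "0 \<le> x \<Longrightarrow> x \<le> y \<Longrightarrow> y \<le> 1 \<Longrightarrow> \<theta> x \<le> \<theta> y + (1/2)^k"
proof (induction k arbitrary: x y)
  case 0
  thus ?case using theta_alpha_bounds[of x] theta_alpha_bounds[of y] by simp
next
  case (Suc k)
  show ?case
  proof (cases "x = 0")
    case False
    hence x: "0 < x" "x \<le> 1" and y: "0 < y" "y \<le> 1" using Suc.prems by auto
    have n: "1 \<le> idx a x" using idx_bounds(1)[OF x] .
    show ?thesis
    proof (cases "idx a y = idx a x")
      case True
      have "L y \<le> L x"
        using True Suc.prems x y a_pos[OF n] by (simp add: L_alpha_def divide_right_mono)
      hence IH: "\<theta> (L y) \<le> \<theta> (L x) + (1/2)^k"
        using Suc.IH L_bounds x y by (meson less_imp_le)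
      have "\<theta> x - \<theta> y = (1/2)^idx a x * (\<theta> (L y) - \<theta> (L x))"
        using theta_alpha_rec[OF x] theta_alpha_rec[OF y] True by (simp add: algebra_simps)
      also have "\<dots> \<le> (1/2)^idx a x * (1/2)^k"
        using IH by (intro mult_left_mono) auto
      also have "\<dots> \<le> (1/2)^1 * (1/2)^k"
        using n by (intro mult_right_mono power_decreasing) auto
      finally show ?thesis by simp
    next
      case False
      hence "Suc (idx a y) \<le> idx a x" using idx_antimono[OF x(1) Suc.prems(2,3)] by simp
      hence "(1/2::real)^idx a x \<le> (1/2)^Suc (idx a y)" by (intro power_decreasing) auto
      hence "\<theta> x \<le> \<theta> y"
        using theta_alpha_idx_bounds(2)[OF x] theta_alpha_idx_bounds(1)[OF y] by simp
      thus ?thesis by (simp add: add_increasing2)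
    qed
  qed (use theta_alpha_bounds Suc.prems in simp)
qed

lemma theta_alpha_mono:
  assumes "0 \<le> x" "x \<le> y" "y \<le> 1"
  shows "\<theta> x \<le> \<theta> y"
proof -
  have "\<theta> x - \<theta> y \<le> 1 * (1/2)^k" for k
    using theta_alpha_approx_mono[OF assms, of k] by simp
  thus ?thesis using nonpos_if_le_geometric by fastforce
qed

lemma theta_alpha_eq_0_iff: "0 \<le> x \<Longrightarrow> x \<le> 1 \<Longrightarrow> \<theta> x = 0 \<longleftrightarrow> x = 0"
  using theta_alpha_idx_bounds(1)[of x] by (cases "x = 0") (auto simp: order.order_iff_strict)

lemma theta_alpha_ne_1:
  assumes "0 \<le> x" "x < 1"
  shows "\<theta> x \<noteq> 1"
proof
  assume theta_x: "\<theta> x = 1"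
  hence "x \<noteq> 0" by auto
  hence x: "0 < x" "x \<le> 1" using assms by auto
  show False
  proof (cases "idx a x = 1")
    case True
    have "L x = (1 - x) / a 1" using True x by (simp add: L_alpha_def)
    moreover have "\<theta> (L x) = 0" using theta_alpha_rec[OF x] True theta_x by simp
    ultimately show False
      using theta_alpha_eq_0_iff[of "L x"] L_bounds[of x] a_pos[of 1] x assms by simp
  next
    case False
    hence "(1/2::real)^idx a x \<le> (1/2)^2"
      using idx_bounds(1)[OF x] by (intro power_decreasing) auto
    moreover have "(1/2::real)^2 = 1/4" by (simp add: power2_eq_square)
    ultimately show False using theta_alpha_idx_bounds(2)[OF x] theta_x by linarith
  qed
qed

text \<open>If \<open>\<theta>\<close> identified \<open>x < y\<close>, both would lie in one interval \<open>A\<^sub>n\<close> (else \<open>\<theta> y\<close> would be the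
  value at a right endpoint, forcing \<open>\<theta> (L y) = 1\<close>), and \<open>L\<close> would stretch their distance by
  \<open>1 / a\<^sub>n \<ge> 1 / q\<close> while keeping the values equal.\<close>

lemma theta_alpha_eq_imp_close:
  assumes q: "0 \<le> q" "\<And>n. 1 \<le> n \<Longrightarrow> a n \<le> q"
  shows "0 \<le> x \<Longrightarrow> x < y \<Longrightarrow> y \<le> 1 \<Longrightarrow> \<theta> x = \<theta> y \<Longrightarrow> y - x \<le> q^k"
proof (induction k arbitrary: x y)
  case (Suc k)
  hence y: "0 < y" "y \<le> 1" by auto
  let ?n = "idx a y"
  note bounds = idx_bounds[OF y]
  have "x \<noteq> 0" using Suc.prems theta_alpha_eq_0_iff[of y] y by auto
  hence x: "0 < x" "x \<le> 1" using Suc.prems by auto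
  show ?case
  proof (cases "x \<le> tt a (Suc ?n)")
    case True
    have "\<theta> x \<le> \<theta> (tt a (Suc ?n))" "\<theta> (tt a (Suc ?n)) \<le> \<theta> y"
      using True x y bounds tt_pos[of "Suc ?n"] tt_le_1[of "Suc ?n"]
      by (auto intro!: theta_alpha_mono)
    hence "\<theta> y = 2 * (1/2)^Suc ?n" using Suc.prems theta_alpha_tt[of "Suc ?n"] by simp
    hence "\<theta> (L y) = 1" using theta_alpha_rec[OF y] by simp
    thus ?thesis using theta_alpha_ne_1[of "L y"] L_bounds[of y] y by simp
  next
    case False
    hence same: "idx a x = ?n"
      using bounds Suc.prems by (intro idx_eqI) (auto simp: AA_def)
    have an: "0 < a ?n" using a_pos[OF bounds(1)] .
    have "(1/2)^?n * (2 - \<theta> (L x)) = (1/2)^?n * (2 - \<theta> (L y))"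
      using Suc.prems(4) unfolding theta_alpha_rec[OF x] theta_alpha_rec[OF y] same .
    hence "\<theta> (L y) = \<theta> (L x)" by simp
    moreover have "L y < L x"
      using same Suc.prems an x by (simp add: L_alpha_def divide_strict_right_mono)
    moreover have "0 \<le> L y" by (rule L_bounds(1)) (use y in auto)
    moreover have "L x \<le> 1" by (rule less_imp_le[OF L_bounds(2)]) (use x in auto)
    ultimately have "L x - L y \<le> q^k" by (intro Suc.IH) auto
    moreover have "L x - L y = (y - x) / a ?n"
      using same x y by (simp add: L_alpha_def diff_divide_distrib)
    ultimately have "y - x \<le> a ?n * q^k" using an by (simp add: divide_le_eq mult.commute)
    also have "\<dots> \<le> q * q^k" using q bounds(1) by (intro mult_right_mono) auto
    finally show ?thesis by simp
  qed
qed simp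

lemma theta_alpha_strict_mono:
  assumes "0 \<le> x" "x < y" "y \<le> 1"
  shows "\<theta> x < \<theta> y"
proof (rule ccontr)
  assume "\<not> \<theta> x < \<theta> y"
  hence eq: "\<theta> x = \<theta> y" using theta_alpha_mono[of x y] assms by simp
  obtain q where q: "0 \<le> q" "q < 1" "\<And>n. 1 \<le> n \<Longrightarrow> a n \<le> q" using a_le_uniform by blast
  obtain k where "q^k < y - x" using real_arch_pow_inv[of "y - x" q] q assms by auto
  thus False using theta_alpha_eq_imp_close[OF q(1,3) assms eq, of k] by simp
qed

lemma theta_alpha_half:
  assumes "0 \<le> w" "w \<le> 1"
  shows "\<exists>x\<in>{0..1}. \<theta> x = \<theta> w / 2"
proof (cases "w = 0")
  case False
  hence w: "0 < w" "w \<le> 1" using assms by auto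
  let ?n = "idx a w"
  \<comment> \<open>the point of \<open>A\<^sub>n\<^sub>+\<^sub>1\<close> with the same image under \<open>L\<close> as \<open>w \<in> A\<^sub>n\<close>\<close>
  define x where "x = tt a (Suc ?n) - a (Suc ?n) * L w"
  have "tt a (Suc ?n) = a (Suc ?n) + tt a (Suc (Suc ?n))" by (rule tt_eq_add) simp
  moreover have "0 < a (Suc ?n)" by (rule a_pos) simp
  moreover have "0 \<le> L w" "L w < 1" using L_bounds w by auto
  ultimately have "x \<in> AA a (Suc ?n)"
    unfolding AA_def x_def by (auto simp: mult_less_cancel_left2)
  hence idx_x: "idx a x = Suc ?n" by (intro idx_eqI) simp_all
  have x: "0 < x" "x \<le> 1"
    using \<open>x \<in> AA a (Suc ?n)\<close> tt_pos[of "Suc (Suc ?n)"] tt_le_1[of "Suc ?n"] unfolding AA_def by auto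
  have "L x = L w"
    using x idx_x \<open>0 < a (Suc ?n)\<close> by (simp add: L_alpha_def x_def)
  hence "\<theta> x = \<theta> w / 2"
    using theta_alpha_rec[OF x] theta_alpha_rec[OF w] idx_x by simp
  thus ?thesis using x by auto
qed (auto intro!: bexI[of _ 0])

lemma theta_alpha_one_minus_half:
  assumes "0 \<le> w" "w \<le> 1"
  shows "\<exists>x\<in>{0..1}. \<theta> x = 1 - \<theta> w / 2"
proof (cases "w = 1")
  case True
  have "\<theta> (tt a 2) = 1 - \<theta> w / 2"
    using theta_alpha_tt[of 2] True by (simp add: power2_eq_square)
  thus ?thesis using tt_pos[of 2] tt_le_1[of 2] by (intro bexI[of _ "tt a 2"]) auto
next
  case False
  \<comment> \<open>the point of \<open>A\<^sub>1\<close> mapped to \<open>w\<close> by \<open>L\<close>\<close>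
  define x where "x = 1 - a 1 * w"
  have a1: "0 < a 1" by (rule a_pos) simp
  have t2: "tt a (Suc 1) = 1 - a 1" using tt_eq_add[of 1] by simp
  have t2_pos: "0 < tt a (Suc 1)" by (rule tt_pos) simp
  have aw: "0 \<le> a 1 * w" "a 1 * w < a 1" using a1 assms False by simp_all
  have "x \<in> AA a 1"
    unfolding AA_def x_def greaterThanAtMost_iff t2 tt_1(2) using aw by linarith
  hence idx_x: "idx a x = 1" by (intro idx_eqI) simp_all
  have x: "0 < x" "x \<le> 1" using t2 t2_pos aw unfolding x_def by linarith+
  have "L x = w"
    using x idx_x a1 by (simp add: L_alpha_def x_def)
  hence "\<theta> x = 1 - \<theta> w / 2"
    using theta_alpha_rec[OF x] idx_x by simp
  thus ?thesis using x by auto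
qed

lemma theta_alpha_dyadic: "(j::nat) \<le> 2^m \<Longrightarrow> \<exists>x\<in>{0..1}. \<theta> x = real j / 2^m"
proof (induction m arbitrary: j)
  case 0
  hence "j = 0 \<or> j = 1" by auto
  thus ?case by (auto intro: bexI[of _ 0] bexI[of _ 1])
next
  case (Suc m)
  show ?case
  proof (cases "j \<le> 2^m")
    case True
    then obtain w where "w \<in> {0..1}" "\<theta> w = j / 2^m" using Suc.IH by blast
    moreover have "\<exists>x\<in>{0..1}. \<theta> x = \<theta> w / 2"
      using \<open>w \<in> {0..1}\<close> by (intro theta_alpha_half) auto
    then obtain x where "x \<in> {0..1}" "\<theta> x = \<theta> w / 2" ..
    ultimately show ?thesis by (intro bexI[of _ x]) simp_all
  next
    case False
    hence "2^Suc m - j \<le> 2^m" by simp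
    then obtain w where w: "w \<in> {0..1}" "\<theta> w = real (2^Suc m - j) / 2^m" using Suc.IH by blast
    have "\<exists>x\<in>{0..1}. \<theta> x = 1 - \<theta> w / 2"
      using w by (intro theta_alpha_one_minus_half) auto
    then obtain x where x: "x \<in> {0..1}" "\<theta> x = 1 - \<theta> w / 2" ..
    have "\<theta> x = 1 - (2^Suc m - real j) / 2^m / 2"
      using x(2) w(2) Suc.prems by (simp add: of_nat_diff)
    also have "\<dots> = real j / 2^Suc m" by (simp add: field_simps)
    finally show ?thesis using x(1) by blast
  qed
qed

lemma theta_alpha_dense:
  assumes "0 \<le> c" "c < d" "d \<le> 1"
  shows "\<exists>x\<in>{0..1}. c < \<theta> x \<and> \<theta> x < d"
proof -
  obtain m where m: "(1/2::real)^m < d - c"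
    using real_arch_pow_inv[of "d - c" "1/2"] assms by auto
  define j where "j = nat \<lfloor>c * 2^m\<rfloor> + 1"
  have "real j = of_int \<lfloor>c * 2^m\<rfloor> + 1"
    unfolding j_def using assms by simp
  hence j: "c * 2^m < j" "j \<le> c * 2^m + 1"
    using of_int_floor_le[of "c * 2^m"] real_of_int_floor_add_one_gt[of "c * 2^m"] by linarith+
  have "c < j / 2^m" using j by (simp add: field_simps)
  moreover have "j / 2^m < d"
  proof -
    have "real j / 2^m \<le> c + (1/2)^m" using j by (simp add: field_simps)
    thus ?thesis using m by simp
  qed
  moreover have "j \<le> 2^m"
  proof -
    have "real j < d * 2^m" using \<open>j / 2^m < d\<close> by (simp add: divide_less_eq)
    also have "\<dots> \<le> 2^m" using assms by simp
    finally show ?thesis by simp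
  qed
  moreover obtain x where "x \<in> {0..1}" "\<theta> x = j / 2^m"
    using theta_alpha_dyadic[OF \<open>j \<le> 2^m\<close>] ..
  ultimately show ?thesis by (intro bexI[of _ x]) auto
qed

lemma theta_alpha_continuous: "continuous_on {0..1} \<theta>"
  by (rule continuous_on_mono_dense_image[where c=0 and d=1])
     (use theta_alpha_mono theta_alpha_bounds theta_alpha_dense in auto)

lemma theta_alpha_image: "\<theta> ` {0..1} = {0..1}"
proof
  show "\<theta> ` {0..1} \<subseteq> {0..1}" using theta_alpha_bounds by auto
  show "{0..1} \<subseteq> \<theta> ` {0..1}"
    using IVT'[of \<theta> 0 _ 1] theta_alpha_continuous by force
qed

lemma theta_alpha_inj: "inj_on \<theta> {0..1}"
  by (rule inj_onI) (metis atLeastAtMost_iff less_irrefl linorder_neqE theta_alpha_strict_mono)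

lemma theta_alpha_homeomorphism: "\<exists>g. homeomorphism {0..1} {0..1} \<theta> g"
  by (rule homeomorphism_compact)
     (simp_all add: theta_alpha_continuous theta_alpha_image theta_alpha_inj)

end

section \<open>Cylinders of the tent map\<close>

lemma tent_bounds: "0 \<le> u \<Longrightarrow> u \<le> 1 \<Longrightarrow> 0 \<le> tent u \<and> tent u \<le> 1"
  by (simp add: tent_def)

lemma tent_measurable: "tent \<in> borel_measurable borel"
proof -
  have eq: "tent u = 1 - \<bar>2 * u - 1\<bar>" for u by (simp add: tent_def)
  show ?thesis unfolding eq[abs_def] by measurable
qed

fun tent_cyl :: "bool list \<Rightarrow> real set" where
  "tent_cyl [] = {0..1}"
| "tent_cyl (b # xs) = {u \<in> {0..1}. (1/2 < u \<longleftrightarrow> b) \<and> tent u \<in> tent_cyl xs}"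

fun tent_itinerary :: "nat \<Rightarrow> real \<Rightarrow> bool list" where
  "tent_itinerary 0 u = []"
| "tent_itinerary (Suc n) u = (1/2 < u) # tent_itinerary n (tent u)"

lemma tent_cyl_subset: "tent_cyl xs \<subseteq> {0..1}"
  by (cases xs) auto

lemma tent_cyl_borel: "tent_cyl xs \<in> sets borel"
proof (induction xs)
  case (Cons b xs)
  have "tent_cyl (b # xs) = {0..1} \<inter> (if b then {1/2<..} else {..1/2}) \<inter> tent -` tent_cyl xs"
    by auto
  thus ?case using measurable_sets[OF tent_measurable Cons.IH] by simp
qed simp

lemma length_tent_itinerary: "length (tent_itinerary n u) = n"
  by (induction n arbitrary: u) auto

lemma mem_tent_cyl_itinerary: "0 \<le> u \<Longrightarrow> u \<le> 1 \<Longrightarrow> u \<in> tent_cyl (tent_itinerary n u)"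
  by (induction n arbitrary: u) (auto simp: tent_bounds)

lemma tent_cyl_False_sandwich:
  assumes "0 \<le> p" "p + h \<le> 1" "{p<..<p + h} \<subseteq> tent_cyl xs" "tent_cyl xs \<subseteq> {p..p + h}"
  shows "{p/2<..<p/2 + h/2} \<subseteq> tent_cyl (False # xs)" "tent_cyl (False # xs) \<subseteq> {p/2..p/2 + h/2}"
proof -
  show "{p/2<..<p/2 + h/2} \<subseteq> tent_cyl (False # xs)"
  proof
    fix u assume u: "u \<in> {p/2<..<p/2 + h/2}"
    hence "u < 1/2" "tent u = 2 * u" using assms(2) by (auto simp: tent_def)
    moreover have "2 * u \<in> {p<..<p + h}" using u by auto
    ultimately show "u \<in> tent_cyl (False # xs)" using assms(1,3) u by auto
  qed
  show "tent_cyl (False # xs) \<subseteq> {p/2..p/2 + h/2}"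
  proof
    fix u assume "u \<in> tent_cyl (False # xs)"
    hence "tent u = 2 * u" "tent u \<in> tent_cyl xs" by (auto simp: tent_def)
    thus "u \<in> {p/2..p/2 + h/2}" using assms(4) by auto
  qed
qed

lemma tent_cyl_True_sandwich:
  assumes "0 \<le> p" "p + h \<le> 1" "{p<..<p + h} \<subseteq> tent_cyl xs" "tent_cyl xs \<subseteq> {p..p + h}"
  defines "p' \<equiv> 1 - (p + h) / 2"
  shows "{p'<..<p' + h/2} \<subseteq> tent_cyl (True # xs)" "tent_cyl (True # xs) \<subseteq> {p'..p' + h/2}"
proof -
  show "{p'<..<p' + h/2} \<subseteq> tent_cyl (True # xs)"
  proof
    fix u assume u: "u \<in> {p'<..<p' + h/2}"
    hence "1/2 < u" "tent u = 2 - 2 * u" using assms(2) unfolding p'_def by (auto simp: tent_def field_simps)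
    moreover have "2 - 2 * u \<in> {p<..<p + h}" using u unfolding p'_def by (auto simp: field_simps)
    ultimately show "u \<in> tent_cyl (True # xs)" using assms(1,3) u unfolding p'_def by auto
  qed
  show "tent_cyl (True # xs) \<subseteq> {p'..p' + h/2}"
  proof
    fix u assume "u \<in> tent_cyl (True # xs)"
    hence "tent u = 2 - 2 * u" "tent u \<in> tent_cyl xs" by (auto simp: tent_def)
    thus "u \<in> {p'..p' + h/2}" using assms(4) unfolding p'_def by (auto simp: field_simps)
  qed
qed

lemma tent_cyl_sandwich:
  "\<exists>p. 0 \<le> p \<and> p + (1/2)^length xs \<le> 1 \<and>
     {p<..<p + (1/2)^length xs} \<subseteq> tent_cyl xs \<and> tent_cyl xs \<subseteq> {p..p + (1/2)^length xs}"
proof (induction xs)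
  case Nil
  thus ?case by (intro exI[of _ 0]) auto
next
  case (Cons b xs)
  define h where "h = (1/2::real)^length xs"
  obtain p where p: "0 \<le> p" "p + h \<le> 1" "{p<..<p + h} \<subseteq> tent_cyl xs" "tent_cyl xs \<subseteq> {p..p + h}"
    using Cons.IH unfolding h_def by blast
  have h: "0 < h" "(1/2::real)^length (b # xs) = h / 2" unfolding h_def by simp_all
  show ?case
  proof (cases b)
    case False
    thus ?thesis using tent_cyl_False_sandwich[OF p] p h by (intro exI[of _ "p/2"]) auto
  next
    case True
    have "0 \<le> 1 - (p + h) / 2" "1 - (p + h) / 2 + h / 2 \<le> 1" using p h by auto
    thus ?thesis using tent_cyl_True_sandwich[OF p] True h
      by (intro exI[of _ "1 - (p + h) / 2"]) auto
  qed
qed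

lemma ex_tent_cyl_subset_dyadic:
  "j < 2^n \<Longrightarrow> \<exists>xs. length xs = n \<and> tent_cyl xs \<subseteq> {real j / 2^n..(real j + 1) / 2^n}"
proof (induction n arbitrary: j)
  case 0
  thus ?case by (intro exI[of _ "[]"]) auto
next
  case (Suc n)
  show ?case
  proof (cases "j < 2^n")
    case True
    then obtain xs where xs: "length xs = n" "tent_cyl xs \<subseteq> {real j / 2^n..(real j + 1) / 2^n}"
      using Suc.IH by blast
    have "tent_cyl (False # xs) \<subseteq> {real j / 2^Suc n..(real j + 1) / 2^Suc n}"
    proof
      fix u assume u: "u \<in> tent_cyl (False # xs)"
      hence "tent u = 2 * u" "tent u \<in> tent_cyl xs" by (auto simp: tent_def)
      hence "2 * u \<in> {real j / 2^n..(real j + 1) / 2^n}" using xs(2) by auto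
      thus "u \<in> {real j / 2^Suc n..(real j + 1) / 2^Suc n}" by (auto simp: field_simps)
    qed
    thus ?thesis using xs by (intro exI[of _ "False # xs"]) simp
  next
    case False
    define j' where "j' = 2^Suc n - 1 - j"
    have "j' < 2^n" using False Suc.prems unfolding j'_def by simp
    then obtain xs where xs: "length xs = n" "tent_cyl xs \<subseteq> {real j' / 2^n..(real j' + 1) / 2^n}"
      using Suc.IH by blast
    have j': "real j' = 2^Suc n - 1 - real j" using Suc.prems unfolding j'_def by (simp add: of_nat_diff)
    have "tent_cyl (True # xs) \<subseteq> {real j / 2^Suc n..(real j + 1) / 2^Suc n}"
    proof
      fix u assume u: "u \<in> tent_cyl (True # xs)"
      hence "tent u = 2 - 2 * u" "tent u \<in> tent_cyl xs" by (auto simp: tent_def)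
      hence "2 - 2 * u \<in> {real j' / 2^n..(real j' + 1) / 2^n}" using xs(2) by auto
      thus "u \<in> {real j / 2^Suc n..(real j + 1) / 2^Suc n}" using j' by (auto simp: field_simps)
    qed
    thus ?thesis using xs by (intro exI[of _ "True # xs"]) simp
  qed
qed

lemma measure_lborel_between:
  fixes S :: "real set"
  assumes "S \<in> sets borel" "{p<..<q} \<subseteq> S" "S \<subseteq> {p..q}" "p \<le> q"
  shows "measure lborel S = q - p"
proof -
  have "emeasure lborel {p<..<q} \<le> emeasure lborel S" using assms by (intro emeasure_mono) auto
  moreover have "emeasure lborel S \<le> emeasure lborel {p..q}" using assms by (intro emeasure_mono) auto
  ultimately have "emeasure lborel S = ennreal (q - p)" using assms(4) by (simp add: antisym)
  thus ?thesis unfolding measure_def using assms(4) by simp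
qed

lemma measure_lborel_tent_cyl: "measure lborel (tent_cyl xs) = (1/2)^length xs"
  using tent_cyl_sandwich[of xs] measure_lborel_between[OF tent_cyl_borel] by fastforce

section \<open>Measures on \<open>[0,1]\<close> with dyadic lower bounds\<close>

context
  fixes \<nu> :: "real measure"
  assumes finite: "finite_measure \<nu>"
    and sets_\<nu>: "sets \<nu> = sets borel"
    and total: "measure \<nu> {0..1} = 1"
    and null: "\<And>u. 0 \<le> u \<Longrightarrow> u \<le> 1 \<Longrightarrow> measure \<nu> {u} = 0"
    and dyadic: "\<And>k j. j < 2^k \<Longrightarrow> (1/2)^k \<le> measure \<nu> {real j / 2^k..(real j + 1) / 2^k}"
begin

lemma measure_Icc_split:
  assumes "p \<le> q" "q \<le> r" "0 \<le> q" "q \<le> 1"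
  shows "measure \<nu> {p..r} = measure \<nu> {p..q} + measure \<nu> {q..r}"
proof -
  have union: "measure \<nu> (A \<union> {q<..r}) = measure \<nu> A + measure \<nu> {q<..r}"
    if "A \<in> sets borel" "A \<subseteq> {..q}" for A
  proof -
    have "A \<inter> {q<..r} = {}" using that(2) by auto
    thus ?thesis
      using finite_measure.finite_measure_Union[OF finite] that(1) sets_\<nu>
      by (simp add: greaterThanAtMost_borel)
  qed
  have "{p..r} = {p..q} \<union> {q<..r}" "{q..r} = {q} \<union> {q<..r}" using assms by auto
  thus ?thesis
    using union[of "{p..q}"] union[of "{q}"] null[OF assms(3,4)] by (simp add: atLeastAtMost_borel)
qed

lemma measure_Icc_dyadic_ge:
  "i + m \<le> 2^k \<Longrightarrow> real m / 2^k \<le> measure \<nu> {real i / 2^k..(real i + real m) / 2^k}"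
proof (induction m)
  case (Suc m)
  let ?r = "(real i + real m) / 2^k"
  have "i + m \<le> 2^k" using Suc.prems by simp
  hence "real (i + m) \<le> 2^k" by (simp only: of_nat_le_numeral_power_cancel_iff)
  hence r: "0 \<le> ?r" "?r \<le> 1" by (simp_all add: divide_le_eq)
  let ?s = "(real i + real (Suc m)) / 2^k"
  have "measure \<nu> {real i / 2^k..?s} = measure \<nu> {real i / 2^k..?r} + measure \<nu> {?r..?s}"
    by (rule measure_Icc_split) (use r in \<open>simp_all add: divide_right_mono\<close>)
  moreover have "real m / 2^k \<le> measure \<nu> {real i / 2^k..?r}" using Suc by simp
  moreover have "(1/2)^k \<le> measure \<nu> {?r..?s}"
    using dyadic[of "i + m" k] Suc.prems by (simp add: ac_simps)
  moreover have "real (Suc m) / 2^k = real m / 2^k + (1/2)^k" by (simp add: field_simps)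
  ultimately show ?case by simp
qed simp

lemma measure_Icc_0_dyadic:
  assumes "m \<le> 2^k"
  shows "measure \<nu> {0..real m / 2^k} = real m / 2^k"
proof -
  define d where "d = real m / 2^k"
  have d: "0 \<le> d" "d \<le> 1" using assms unfolding d_def by (simp_all add: divide_le_eq)
  have "d \<le> measure \<nu> {0..d}" using measure_Icc_dyadic_ge[of 0 m k] assms unfolding d_def by simp
  moreover have "1 - d \<le> measure \<nu> {d..1}"
  proof -
    have "real (2^k - m) / 2^k \<le> measure \<nu> {d..(real m + real (2^k - m)) / 2^k}"
      using measure_Icc_dyadic_ge[of m "2^k - m" k] assms unfolding d_def by simp
    moreover have "real (2^k - m) = 2^k - real m" using assms by (simp add: of_nat_diff)
    ultimately show ?thesis unfolding d_def by (simp add: diff_divide_distrib)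
  qed
  moreover have "measure \<nu> {0..1} = measure \<nu> {0..d} + measure \<nu> {d..1}"
    by (rule measure_Icc_split) (use d in auto)
  ultimately show ?thesis using total unfolding d_def by linarith
qed

lemma measure_Icc_0_eq:
  assumes "0 \<le> y" "y \<le> 1"
  shows "measure \<nu> {0..y} = y"
proof (cases "y = 1")
  case False
  have mono: "measure \<nu> {0..s} \<le> measure \<nu> {0..t}" if "s \<le> t" for s t
    using finite_measure.finite_measure_mono[OF finite] sets_\<nu> that by (simp add: atLeastAtMost_borel)
  have close: "\<bar>measure \<nu> {0..y} - y\<bar> \<le> 1 * (1/2)^k" for k
  proof -
    define m where "m = nat \<lfloor>y * 2^k\<rfloor>"
    have "real m = of_int \<lfloor>y * 2^k\<rfloor>" unfolding m_def using assms by simp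
    hence m: "real m \<le> y * 2^k" "y * 2^k < real m + 1"
      using of_int_floor_le[of "y * 2^k"] real_of_int_floor_add_one_gt[of "y * 2^k"] by linarith+
    have "y * 2^k < 2^k" using assms False by simp
    hence "real m < 2^k" using m by linarith
    hence "m + 1 \<le> 2^k" by simp
    have lo: "real m / 2^k \<le> y" using m by (simp add: divide_le_eq)
    have hi: "y \<le> real (m + 1) / 2^k" using m by (simp add: le_divide_eq)
    have "real m / 2^k \<le> measure \<nu> {0..y}"
      using mono[OF lo] measure_Icc_0_dyadic[of m k] \<open>m + 1 \<le> 2^k\<close> by simp
    moreover have "measure \<nu> {0..y} \<le> real (m + 1) / 2^k"
      using mono[OF hi] measure_Icc_0_dyadic[OF \<open>m + 1 \<le> 2^k\<close>] by simp
    moreover have "real (m + 1) / 2^k = real m / 2^k + (1/2)^k" by (simp add: field_simps)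
    ultimately show ?thesis using lo hi by (simp only: abs_le_iff) linarith
  qed
  have "measure \<nu> {0..y} - y \<le> 1 * (1/2)^k" "y - measure \<nu> {0..y} \<le> 1 * (1/2)^k" for k
    using close[of k] by (simp_all only: abs_le_iff) linarith+
  hence "measure \<nu> {0..y} - y \<le> 0" "y - measure \<nu> {0..y} \<le> 0"
    by (metis nonpos_if_le_geometric)+
  thus ?thesis by simp
qed (simp add: total)

end

section \<open>Conjugacy and the measure of maximal entropy\<close>

context luroth_partition
begin

lemma F_alpha_idx_Suc:
  assumes "0 < x" "x \<le> 1" "idx a x = Suc m" "1 \<le> m"
  shows "F x \<in> AA a m" "L (F x) = L x"
proof -
  have a: "0 < a m" "0 < a (Suc m)" using a_pos assms(4) by auto
  have tt_m: "tt a m = a m + tt a (Suc m)" by (rule tt_eq_add[OF assms(4)])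
  have tt_Suc_m: "tt a (Suc m) = a (Suc m) + tt a (Suc (Suc m))" by (rule tt_eq_add) simp
  have bounds: "tt a (Suc (Suc m)) < x" "x \<le> tt a (Suc m)"
    using idx_bounds(2,3)[OF assms(1,2)] assms(3) by simp_all
  define r where "r = (x - tt a (Suc (Suc m))) / a (Suc m)"
  have r: "0 < r" "r \<le> 1" unfolding r_def using bounds tt_Suc_m a by (simp_all add: divide_le_eq)
  have F_eq: "F x = tt a (Suc m) + a m * r"
    using assms unfolding F_alpha_def r_def by simp
  have "0 < a m * r" "a m * r \<le> a m" using r a by (simp_all add: mult_le_cancel_left1)
  thus F_mem: "F x \<in> AA a m" unfolding AA_def F_eq using tt_m by simp
  have "F x \<noteq> 0" using F_mem tt_pos[of "Suc m"] unfolding AA_def by auto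
  hence "L (F x) = (tt a m - F x) / a m"
    using idx_eqI[OF assms(4) F_mem] by (simp add: L_alpha_def)
  also have "\<dots> = 1 - r" using F_eq tt_m a by (simp add: field_simps)
  also have "\<dots> = (tt a (Suc m) - x) / a (Suc m)" unfolding r_def using tt_Suc_m a by (simp add: field_simps)
  also have "\<dots> = L x" using assms by (simp add: L_alpha_def)
  finally show "L (F x) = L x" .
qed

lemma F_alpha_bounds:
  assumes "0 \<le> x" "x \<le> 1"
  shows "0 \<le> F x \<and> F x \<le> 1"
proof (cases "x = 0")
  case False
  hence x: "0 < x" "x \<le> 1" using assms by auto
  obtain m where m: "idx a x = Suc m" using idx_bounds(1)[OF x] by (cases "idx a x") auto
  show ?thesis
  proof (cases "m = 0")
    case True
    thus ?thesis using x m L_bounds[of x] by (simp add: F_alpha_def L_alpha_def)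
  next
    case False
    hence "F x \<in> AA a m" "1 \<le> m" using F_alpha_idx_Suc[OF x m] by auto
    thus ?thesis using tt_pos[of "Suc m"] tt_le_1[of m] unfolding AA_def by auto
  qed
qed (simp add: F_alpha_def)

lemma theta_alpha_F_alpha:
  assumes "0 \<le> x" "x \<le> 1"
  shows "\<theta> (F x) = tent (\<theta> x)"
proof (cases "x = 0")
  case False
  hence x: "0 < x" "x \<le> 1" using assms by auto
  have theta_Lx: "0 \<le> \<theta> (L x)" "\<theta> (L x) \<le> 1"
    using theta_alpha_bounds L_bounds[OF assms] by (auto simp: less_imp_le)
  obtain m where m: "idx a x = Suc m" using idx_bounds(1)[OF x] by (cases "idx a x") auto
  show ?thesis
  proof (cases "m = 0")
    case True
    have "\<theta> x = 1 - \<theta> (L x) / 2" using theta_alpha_rec[OF x] m True by simp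
    moreover have "F x = L x" using x m True by (simp add: F_alpha_def L_alpha_def)
    ultimately show ?thesis using theta_Lx by (simp add: tent_def)
  next
    case False
    hence "1 \<le> m" by simp
    note F_x = F_alpha_idx_Suc[OF x m this]
    have "0 < F x" "F x \<le> 1"
      using F_x(1) tt_pos[of "Suc m"] tt_le_1[OF \<open>1 \<le> m\<close>] unfolding AA_def by auto
    hence "\<theta> (F x) = (1/2)^m * (2 - \<theta> (L x))"
      using theta_alpha_rec[of "F x"] idx_eqI[OF \<open>1 \<le> m\<close> F_x(1)] F_x(2) by simp
    moreover have "\<theta> x = (1/2)^Suc m * (2 - \<theta> (L x))" using theta_alpha_rec[OF x] m by simp
    moreover have "\<theta> x \<le> 1/2"
      using theta_alpha_idx_bounds(2)[OF x] m power_decreasing[OF \<open>1 \<le> m\<close>, of "1/2::real"] by simp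
    hence "tent (\<theta> x) = 2 * \<theta> x" by (auto simp: tent_def)
    ultimately show ?thesis by simp
  qed
qed (simp add: F_alpha_def tent_def)

lemma mem_AA_1_iff:
  assumes "0 \<le> y" "y \<le> 1"
  shows "y \<in> AA a 1 \<longleftrightarrow> 1/2 < \<theta> y"
proof -
  have t2: "0 \<le> tt a 2" "tt a 2 \<le> 1" using tt_pos[of 2] tt_le_1[of 2] by auto
  have theta_t2: "\<theta> (tt a 2) = 1/2" using theta_alpha_tt[of 2] by (simp add: power2_eq_square)
  have "y \<in> AA a 1 \<longleftrightarrow> tt a 2 < y" using assms unfolding AA_def by (simp add: numeral_2_eq_2)
  also have "\<dots> \<longleftrightarrow> 1/2 < \<theta> y"
    using theta_alpha_strict_mono[of "tt a 2" y] theta_alpha_mono[of y "tt a 2"] t2 assms theta_t2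
    by (metis not_le)
  finally show ?thesis .
qed

lemma farey_cyl_Cons:
  "farey_cyl a (b # xs) = {y \<in> {0..1}. (y \<in> AA a 1 \<longleftrightarrow> b) \<and> F y \<in> farey_cyl a xs}"
proof -
  have "(\<forall>k<length (b # xs). (F^^k) y \<in> AA a 1 \<longleftrightarrow> (b # xs) ! k)
      \<longleftrightarrow> (y \<in> AA a 1 \<longleftrightarrow> b) \<and> (\<forall>k<length xs. (F^^k) (F y) \<in> AA a 1 \<longleftrightarrow> xs ! k)" for y
    by (simp add: All_less_Suc2 funpow_Suc_right del: funpow.simps)
  thus ?thesis unfolding farey_cyl_def using F_alpha_bounds by auto
qed

lemma farey_cyl_eq_preimage: "farey_cyl a xs = {y \<in> {0..1}. \<theta> y \<in> tent_cyl xs}"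
proof (induction xs)
  case Nil
  thus ?case using theta_alpha_bounds by (auto simp: farey_cyl_def)
next
  case (Cons b xs)
  have "y \<in> farey_cyl a (b # xs) \<longleftrightarrow> \<theta> y \<in> tent_cyl (b # xs)" if y: "0 \<le> y" "y \<le> 1" for y
    using y mem_AA_1_iff[OF y] theta_alpha_F_alpha[OF y] F_alpha_bounds[OF y] theta_alpha_bounds[OF y]
    unfolding farey_cyl_Cons Cons.IH by auto
  moreover have "farey_cyl a (b # xs) \<subseteq> {0..1}" unfolding farey_cyl_def by auto
  ultimately show ?case by auto
qed

lemma theta_alpha_borel_measurable:
  assumes "sets \<mu> = sets (restrict_space borel {0..1})"
  shows "\<theta> \<in> borel_measurable \<mu>"
  using borel_measurable_continuous_on_restrict[OF theta_alpha_continuous]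
  by (simp add: measurable_cong_sets[OF assms refl])

lemma farey_cyl_sets: "farey_cyl a xs \<in> sets (restrict_space borel {0..1})"
proof -
  have "\<theta> -` tent_cyl xs \<inter> space (restrict_space borel {0..1}) \<in> sets (restrict_space borel {0..1})"
    by (rule measurable_sets[OF theta_alpha_borel_measurable[OF refl] tent_cyl_borel])
  moreover have "\<theta> -` tent_cyl xs \<inter> space (restrict_space borel {0..1}) = farey_cyl a xs"
    unfolding farey_cyl_eq_preimage by auto
  ultimately show ?thesis by simp
qed

lemma ex_is_mu_alpha: "\<exists>\<mu>. is_mu_alpha a \<mu>"
proof -
  obtain g where "homeomorphism {0..1} {0..1} \<theta> g" using theta_alpha_homeomorphism by blast
  hence g: "continuous_on {0..1} g" "g ` {0..1} \<subseteq> {0..1}" "\<And>u. u \<in> {0..1} \<Longrightarrow> \<theta> (g u) = u"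
    unfolding homeomorphism_def by auto
  define U where "U = restrict_space lborel {0..1::real}"
  have space_U: "space U = {0..1}" unfolding U_def by simp
  have "prob_space U" unfolding U_def by (rule prob_space_restrict_space) auto
  have "g \<in> borel_measurable U"
    using borel_measurable_continuous_on_restrict[OF g(1)] unfolding U_def
    by (simp add: measurable_cong_sets[OF sets_restrict_space_cong[OF sets_lborel] refl])
  hence g_meas: "g \<in> U \<rightarrow>\<^sub>M restrict_space borel {0..1}"
    by (rule measurable_restrict_space2[rotated]) (use g(2) space_U in auto)
  define \<mu> where "\<mu> = distr U (restrict_space borel {0..1}) g"
  have "is_mu_alpha a \<mu>" unfolding is_mu_alpha_def
  proof (intro conjI allI)
    show "prob_space \<mu>" unfolding \<mu>_def by (rule prob_space.prob_space_distr[OF \<open>prob_space U\<close> g_meas])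
    show "sets \<mu> = sets (restrict_space borel {0..1})" unfolding \<mu>_def by simp
    fix xs
    have "g -` farey_cyl a xs \<inter> space U = tent_cyl xs"
      using g tent_cyl_subset[of xs] unfolding space_U farey_cyl_eq_preimage by (auto simp: subset_eq)
    hence "measure \<mu> (farey_cyl a xs) = measure U (tent_cyl xs)"
      unfolding \<mu>_def using measure_distr[OF g_meas farey_cyl_sets] by simp
    also have "\<dots> = measure lborel (tent_cyl xs)"
      unfolding U_def by (rule measure_restrict_space) (auto simp: tent_cyl_subset)
    finally show "measure \<mu> (farey_cyl a xs) = (1/2)^length xs" by (simp add: measure_lborel_tent_cyl)
  qed
  thus ?thesis by blast
qed

lemma theta_alpha_vimage_Icc:
  assumes "0 \<le> x" "x \<le> 1"
  shows "\<theta> -` {0..\<theta> x} \<inter> {0..1} = {0..x}"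
proof (intro set_eqI iffI)
  fix y assume "y \<in> \<theta> -` {0..\<theta> x} \<inter> {0..1}"
  hence y: "0 \<le> y" "y \<le> 1" "\<theta> y \<le> \<theta> x" by auto
  hence "y \<le> x" using theta_alpha_strict_mono[of x y] assms by (cases "y \<le> x") auto
  thus "y \<in> {0..x}" using y by simp
next
  fix y assume "y \<in> {0..x}"
  thus "y \<in> \<theta> -` {0..\<theta> x} \<inter> {0..1}"
    using theta_alpha_mono[of y x] theta_alpha_bounds[of y] assms by auto
qed

text \<open>Pushed forward by \<open>\<theta>\<close>, a measure of maximal entropy gives each tent cylinder of
  length \<open>k\<close> mass \<open>2\<^sup>-\<^sup>k\<close>; this already forces Lebesgue measure on \<open>[0,1]\<close>.\<close>

lemma distr_theta_alpha_Icc: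
  assumes \<mu>: "is_mu_alpha a \<mu>" and y: "0 \<le> y" "y \<le> 1"
  shows "measure (distr \<mu> borel \<theta>) {0..y} = y"
proof -
  have prob: "prob_space \<mu>" and sets_\<mu>: "sets \<mu> = sets (restrict_space borel {0..1::real})"
    and cyl: "\<And>xs. measure \<mu> (farey_cyl a xs) = (1/2)^length xs"
    using \<mu> unfolding is_mu_alpha_def by auto
  have space_\<mu>: "space \<mu> = {0..1}" using sets_eq_imp_space_eq[OF sets_\<mu>] by simp
  have theta_meas: "\<theta> \<in> borel_measurable \<mu>"
    by (rule theta_alpha_borel_measurable[OF sets_\<mu>])
  define \<nu> where "\<nu> = distr \<mu> borel \<theta>"
  have "prob_space \<nu>" unfolding \<nu>_def by (rule prob_space.prob_space_distr[OF prob theta_meas])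
  hence finite: "finite_measure \<nu>" by (simp add: prob_space_def)
  have sets_\<nu>: "sets \<nu> = sets borel" unfolding \<nu>_def by simp
  have \<nu>_cyl: "measure \<nu> (tent_cyl xs) = (1/2)^length xs" for xs
  proof -
    have "\<theta> -` tent_cyl xs \<inter> space \<mu> = farey_cyl a xs"
      unfolding space_\<mu> farey_cyl_eq_preimage by auto
    thus ?thesis unfolding \<nu>_def using measure_distr[OF theta_meas tent_cyl_borel] cyl by simp
  qed
  have null: "measure \<nu> {u} = 0" if u: "0 \<le> u" "u \<le> 1" for u
  proof -
    have "measure \<nu> {u} \<le> 1 * (1/2)^k" for k
      using finite_measure.finite_measure_mono[OF finite, of "{u}" "tent_cyl (tent_itinerary k u)"]
        mem_tent_cyl_itinerary[OF u] \<nu>_cyl length_tent_itinerary tent_cyl_borel sets_\<nu> by simp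
    thus ?thesis using nonpos_if_le_geometric measure_nonneg[of \<nu> "{u}"] by (metis order.antisym)
  qed
  have dyadic: "(1/2)^k \<le> measure \<nu> {real j / 2^k..(real j + 1) / 2^k}" if jk: "j < 2^k" for j k
  proof -
    obtain xs where xs: "length xs = k" "tent_cyl xs \<subseteq> {real j / 2^k..(real j + 1) / 2^k}"
      using ex_tent_cyl_subset_dyadic[OF jk] by blast
    have "measure \<nu> (tent_cyl xs) \<le> measure \<nu> {real j / 2^k..(real j + 1) / 2^k}"
      by (rule finite_measure.finite_measure_mono[OF finite xs(2)]) (simp add: sets_\<nu>)
    thus ?thesis using \<nu>_cyl[of xs] xs(1) by simp
  qed
  have "measure \<nu> {0..1} = 1" using \<nu>_cyl[of "[]"] by simp
  thus ?thesis unfolding \<nu>_def[symmetric] using measure_Icc_0_eq[OF finite sets_\<nu> _ null dyadic y] by simp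
qed

lemma is_mu_alpha_distribution:
  assumes \<mu>: "is_mu_alpha a \<mu>" and x: "0 \<le> x" "x \<le> 1"
  shows "measure \<mu> {0..x} = \<theta> x"
proof -
  have sets_\<mu>: "sets \<mu> = sets (restrict_space borel {0..1::real})"
    using \<mu> unfolding is_mu_alpha_def by auto
  have space_\<mu>: "space \<mu> = {0..1}" using sets_eq_imp_space_eq[OF sets_\<mu>] by simp
  have theta_meas: "\<theta> \<in> borel_measurable \<mu>"
    by (rule theta_alpha_borel_measurable[OF sets_\<mu>])
  have "measure \<mu> {0..x} = measure (distr \<mu> borel \<theta>) {0..\<theta> x}"
    using measure_distr[OF theta_meas, of "{0..\<theta> x}"] theta_alpha_vimage_Icc[OF x] space_\<mu>
    by (simp add: atLeastAtMost_borel)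
  also have "\<dots> = \<theta> x" using distr_theta_alpha_Icc[OF \<mu>] theta_alpha_bounds[OF x] by simp
  finally show ?thesis .
qed

end

theorem lemma2p2:
  fixes a :: "nat \<Rightarrow> real"
  assumes "alpha_partition a"
  shows "(\<exists>g. homeomorphism {0..1} {0..1} (theta_alpha a) g)
    \<and> (\<forall>x\<in>{0..1}. theta_alpha a (F_alpha a x) = tent (theta_alpha a x))
    \<and> (\<exists>\<mu>. is_mu_alpha a \<mu>)
    \<and> (\<forall>\<mu>. is_mu_alpha a \<mu> \<longrightarrow> (\<forall>x\<in>{0..1}. measure \<mu> {0..x} = theta_alpha a x))"
proof -
  interpret luroth_partition a by (rule luroth_partition.intro[OF assms])
  show ?thesis
    using theta_alpha_homeomorphism theta_alpha_F_alpha ex_is_mu_alpha is_mu_alpha_distribution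
    by auto
qed

end
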